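(* Let $k$ be an integer and $\mathcal{H}$ a hypergraph on $n$ vertices. Then $Tr(\hat{\mathcal{H}}_{k})=\{T\cup\{x\}\mid T\in Tr(\mathcal{H}),\ |T|<n-k+1\}\cup\mathcal{J}$, where $\mathcal{J}$ contains only sets of size at least $n-k+1$.
   Context: For a hypergraph $\mathcal{H}$ with vertex set $V(\mathcal{H})$ ($|V(\mathcal{H})|=n$) and hyperedge set $\mathcal{E}(\mathcal{H})$, $\hat{\mathcal{H}}_{k}$ is the hypergraph with vertex set $V(\mathcal{H})\cup\{x\}$, $x$ a new vertex, and hyperedge set $\mathcal{E}(\mathcal{H})\cup\{X\cup\{x\}\mid X\subseteq V(\mathcal{H}),\ |X|=k\}$. $Tr(\cdot)$ denotes the hypergraph of inclusion-minimal transversals (vertex sets meeting every hyperedge). *)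

theory Defs
  imports Main
begin

definition is_transversal :: "'a set \<Rightarrow> 'a set set \<Rightarrow> 'a set \<Rightarrow> bool" where
  "is_transversal V E T \<longleftrightarrow> T \<subseteq> V \<and> (\<forall>e\<in>E. T \<inter> e \<noteq> {})"

definition Tr :: "'a set \<Rightarrow> 'a set set \<Rightarrow> 'a set set" where
  "Tr V E = {T. is_transversal V E T \<and> (\<forall>T'. T' \<subset> T \<longrightarrow> \<not> is_transversal V E T')}"

text \<open>Hyperedges of the hypergraph hat H_k (vertex set insert x V).\<close>
definition hat_edges :: "'a set \<Rightarrow> 'a set set \<Rightarrow> 'a \<Rightarrow> nat \<Rightarrow> 'a set set" where
  "hat_edges V E x k = E \<union> {insert x X | X. X \<subseteq> V \<and> card X = k}"

end

theory Submission
  imports Defs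
begin

text \<open>If \<open>|S| \<le> n - k\<close> for a set \<open>S \<subseteq> V\<close>, some \<open>k\<close>-subset \<open>X\<close> of \<open>V\<close> avoids \<open>S\<close>, and then
  \<open>S\<close> misses the new hyperedge \<open>X \<union> {x}\<close>. So a minimal transversal of \<open>\<hat>H\<^sub>k\<close> with at most
  \<open>n - k\<close> elements contains \<open>x\<close>, and deleting \<open>x\<close> from it gives a minimal transversal of
  \<open>H\<close> (the old hyperedges do not contain \<open>x\<close>). Conversely, for a minimal transversal \<open>T\<close> of \<open>H\<close>
  with \<open>|T| \<le> n - k\<close>, the set \<open>T \<union> {x}\<close> is a minimal transversal of \<open>\<hat>H\<^sub>k\<close>: removing \<open>x\<close>
  leaves a set missing some new hyperedge, removing a vertex of \<open>T\<close> leaves one missing an old one.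
  The remaining minimal transversals form \<open>\<J>\<close>.\<close>

lemma exists_subset_card_disjoint:
  assumes "finite V" "S \<subseteq> V" "card S + k \<le> card V"
  obtains X where "X \<subseteq> V" "card X = k" "X \<inter> S = {}"
proof -
  have "k \<le> card (V - S)"
    using assms by (simp add: card_Diff_subset finite_subset)
  then obtain X where "X \<subseteq> V - S" "card X = k"
    by (meson obtain_subset_with_card_n)
  then show thesis
    using that by blast
qed

lemma Tr_imp_subset: "T \<in> Tr V E \<Longrightarrow> T \<subseteq> V"
  by (simp add: Tr_def is_transversal_def)

lemma is_transversal_hat_edges_insert_iff:
  assumes "\<forall>e\<in>E. e \<subseteq> V" "x \<notin> V" "T \<subseteq> V"
  shows "is_transversal (insert x V) (hat_edges V E x k) (insert x T) \<longleftrightarrow> is_transversal V E T"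
proof
  assume hat_transversal: "is_transversal (insert x V) (hat_edges V E x k) (insert x T)"
  show "is_transversal V E T"
    unfolding is_transversal_def
  proof (intro conjI ballI assms(3))
    fix e assume "e \<in> E"
    then have "insert x T \<inter> e \<noteq> {}" and "x \<notin> e"
      using hat_transversal assms(1,2) by (auto simp: is_transversal_def hat_edges_def)
    then show "T \<inter> e \<noteq> {}"
      by blast
  qed
next
  assume "is_transversal V E T"
  then show "is_transversal (insert x V) (hat_edges V E x k) (insert x T)"
    by (auto simp: is_transversal_def hat_edges_def)
qed

lemma small_not_is_transversal_hat_edges:
  assumes "finite V" "S \<subseteq> V" "x \<notin> S" "card S + k \<le> card V"
  shows "\<not> is_transversal (insert x V) (hat_edges V E x k) S"
proof
  obtain X where "X \<subseteq> V" "card X = k" "X \<inter> S = {}"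
    using exists_subset_card_disjoint assms(1,2,4) .
  then have "insert x X \<in> hat_edges V E x k" and "S \<inter> insert x X = {}"
    using \<open>x \<notin> S\<close> by (auto simp: hat_edges_def)
  moreover assume "is_transversal (insert x V) (hat_edges V E x k) S"
  ultimately show False
    by (auto simp: is_transversal_def)
qed

lemma insert_Tr_hat_edges_iff:
  assumes "finite V" "\<forall>e\<in>E. e \<subseteq> V" "x \<notin> V" "T \<subseteq> V" "card T + k \<le> card V"
  shows "insert x T \<in> Tr (insert x V) (hat_edges V E x k) \<longleftrightarrow> T \<in> Tr V E"
proof -
  let ?H = "hat_edges V E x k"
  note hat_iff = is_transversal_hat_edges_insert_iff[OF assms(2,3)]
  have "x \<notin> T"
    using assms(3,4) by blast
  have minimal_iff: "(\<forall>S. S \<subset> insert x T \<longrightarrow> \<not> is_transversal (insert x V) ?H S)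
      \<longleftrightarrow> (\<forall>T'. T' \<subset> T \<longrightarrow> \<not> is_transversal V E T')"
  proof (intro iffI allI impI)
    fix T' assume hat_minimal: "\<forall>S. S \<subset> insert x T \<longrightarrow> \<not> is_transversal (insert x V) ?H S"
      and "T' \<subset> T"
    have "insert x T' \<subset> insert x T"
      using \<open>T' \<subset> T\<close> \<open>x \<notin> T\<close> by (auto simp: psubset_insert_iff)
    then have "\<not> is_transversal (insert x V) ?H (insert x T')"
      by (simp add: hat_minimal)
    moreover have "T' \<subseteq> V"
      using \<open>T' \<subset> T\<close> assms(4) by (meson psubset_imp_subset subset_trans)
    ultimately show "\<not> is_transversal V E T'"
      by (simp add: hat_iff)
  next
    fix S assume T_minimal: "\<forall>T'. T' \<subset> T \<longrightarrow> \<not> is_transversal V E T'" and "S \<subset> insert x T"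
    show "\<not> is_transversal (insert x V) ?H S"
    proof (cases "x \<in> S")
      case True
      then have "S - {x} \<subset> T"
        using \<open>S \<subset> insert x T\<close> \<open>x \<notin> T\<close> by (simp add: psubset_insert_iff)
      then have "\<not> is_transversal V E (S - {x})" and "S - {x} \<subseteq> V"
        using T_minimal assms(4) by auto
      then show ?thesis
        using hat_iff[of "S - {x}"] True by (simp add: insert_absorb)
    next
      case False
      then have "S \<subseteq> T"
        using \<open>S \<subset> insert x T\<close> \<open>x \<notin> T\<close> by (simp add: psubset_insert_iff)
      then have "S \<subseteq> V" and "card S + k \<le> card V"
        using card_mono[OF finite_subset[OF assms(4,1)] \<open>S \<subseteq> T\<close>] assms(4,5) by auto
      then show ?thesis
        using small_not_is_transversal_hat_edges[OF assms(1) _ False] by blast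
    qed
  qed
  show ?thesis
    unfolding Tr_def using hat_iff[OF assms(4)] minimal_iff by simp
qed

lemma small_Tr_hat_edgesE:
  assumes "finite V" "\<forall>e\<in>E. e \<subseteq> V" "x \<notin> V"
    and "S \<in> Tr (insert x V) (hat_edges V E x k)" "card S + k \<le> card V"
  obtains T where "S = insert x T" "T \<in> Tr V E" "card T + k \<le> card V"
proof -
  have S_transversal: "is_transversal (insert x V) (hat_edges V E x k) S"
    using assms(4) by (simp add: Tr_def)
  then have "S \<subseteq> insert x V"
    by (simp add: is_transversal_def)
  then have "x \<in> S"
    using small_not_is_transversal_hat_edges[OF assms(1) _ _ assms(5)] S_transversal by blast
  let ?T = "S - {x}"
  have "S = insert x ?T" and "?T \<subseteq> V"
    using \<open>x \<in> S\<close> \<open>S \<subseteq> insert x V\<close> by blast+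
  moreover have "card ?T + k \<le> card V"
    using assms(5) card_Diff1_le[of S x] by linarith
  moreover have "?T \<in> Tr V E"
    using insert_Tr_hat_edges_iff[OF assms(1-3) \<open>?T \<subseteq> V\<close> \<open>card ?T + k \<le> card V\<close>] assms(4)
    by (simp add: insert_absorb[OF \<open>x \<in> S\<close>])
  ultimately show thesis
    using that by blast
qed

theorem proposition5:
  fixes V :: "'a set" and E :: "'a set set" and x :: 'a and k n :: nat
  assumes "finite V" and "\<forall>e\<in>E. e \<subseteq> V" and "x \<notin> V" and "card V = n"
  shows "\<exists>J. (\<forall>S\<in>J. int (card S) \<ge> int n - int k + 1) \<and>
    Tr (insert x V) (hat_edges V E x k) =
      {insert x T | T. T \<in> Tr V E \<and> int (card T) < int n - int k + 1} \<union> J"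
proof -
  let ?Tr_hat = "Tr (insert x V) (hat_edges V E x k)"
  let ?L = "{insert x T | T. T \<in> Tr V E \<and> int (card T) < int n - int k + 1}"
  have small_iff: "int (card S) < int n - int k + 1 \<longleftrightarrow> card S + k \<le> card V" for S :: "'a set"
    using assms(4) by linarith
  have "?L \<subseteq> ?Tr_hat"
    using insert_Tr_hat_edges_iff[OF assms(1-3) Tr_imp_subset] small_iff by blast
  moreover have "int (card S) \<ge> int n - int k + 1" if S_Tr: "S \<in> ?Tr_hat" and S_notin: "S \<notin> ?L" for S
  proof (rule ccontr)
    assume "\<not> int (card S) \<ge> int n - int k + 1"
    then have "card S + k \<le> card V"
      using small_iff[of S] by linarith
    then obtain T where "S = insert x T" "T \<in> Tr V E" "card T + k \<le> card V"
      using small_Tr_hat_edgesE[OF assms(1-3) S_Tr] by blast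
    with S_notin show False
      using small_iff[of T] by blast
  qed
  ultimately show ?thesis
    by (intro exI[of _ "?Tr_hat - ?L"]) blast
qed

end
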